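(* The short exact sequence $1\to\mathrm{Sym}(\{0,1\}^* )\to QF\xrightarrow{\pi} F\to 1$ splits.
   Context: Let $\{0,1\}^*$ be the finite words over $\{0,1\}$, the vertices of the rooted binary tree in which $x$ has children $x0$ and $x1$ (two edge colours). $QV$ is the group of bijections $\tau$ of $\{0,1\}^*$ with $\tau(x0)=\tau(x)0$ and $\tau(x1)=\tau(x)1$ for all but finitely many $x$. Each such $\tau$ induces a homeomorphism $\pi(\tau)$ of $\{0,1\}^{\mathbb N}$ by $\pi(\tau)(\ell\omega)=\tau(\ell)\omega$, for $\ell$ in a finite maximal prefix-antichain $L$ with $\tau(\ell s)=\tau(\ell)s$ for all $\ell\in L$ and words $s$; this gives a surjective homomorphism $\pi$ onto Thompson's group $V$ whose kernel is $\mathrm{Sym}(\{0,1\}^* )$, the finitely supported permutations. Thompson's group $F\le V$ consists of the lexicographic-order-preserving elements, $QF=\pi^{-1}(F)$, and $\pi$ also denotes the restriction $QF\to F$. *)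

theory Defs
  imports "HOL-Algebra.Group" "HOL-Library.Sublist"
begin

text \<open>Vertices of the rooted binary tree: finite words over {0,1}, encoded as bool lists
  (False = 0, True = 1). The children of x are x@[False] and x@[True].\<close>

type_synonym word = "bool list"
type_synonym cantor = "nat \<Rightarrow> bool"

definition QV :: "(word \<Rightarrow> word) set" where
  "QV = {\<tau>. bij \<tau> \<and>
      finite {x. \<not> (\<tau> (x @ [False]) = \<tau> x @ [False] \<and> \<tau> (x @ [True]) = \<tau> x @ [True])}}"

definition cat :: "word \<Rightarrow> cantor \<Rightarrow> cantor" where
  "cat l \<omega> = (\<lambda>k. if k < length l then l ! k else \<omega> (k - length l))"

definition max_prefix_antichain :: "word set \<Rightarrow> bool" where
  "max_prefix_antichain L \<longleftrightarrow> finite L \<and>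
     (\<forall>a\<in>L. \<forall>b\<in>L. prefix a b \<longrightarrow> a = b) \<and>
     (\<forall>w. \<exists>l\<in>L. prefix l w \<or> prefix w l)"

definition qpi :: "(word \<Rightarrow> word) \<Rightarrow> cantor \<Rightarrow> cantor" where
  "qpi \<tau> \<omega> = (SOME y. \<exists>L. max_prefix_antichain L \<and> (\<forall>l\<in>L. \<forall>s. \<tau> (l @ s) = \<tau> l @ s) \<and>
       (\<exists>l\<in>L. \<exists>\<omega>'. \<omega> = cat l \<omega>' \<and> y = cat (\<tau> l) \<omega>'))"

definition ThompsonV :: "(cantor \<Rightarrow> cantor) set" where
  "ThompsonV = qpi ` QV"

definition lex_less :: "cantor \<Rightarrow> cantor \<Rightarrow> bool" where
  "lex_less a b \<longleftrightarrow> (\<exists>n. (\<forall>k<n. a k = b k) \<and> \<not> a n \<and> b n)"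

definition ThompsonF :: "(cantor \<Rightarrow> cantor) set" where
  "ThompsonF = {f \<in> ThompsonV. \<forall>a b. lex_less a b \<longrightarrow> lex_less (f a) (f b)}"

definition QF :: "(word \<Rightarrow> word) set" where
  "QF = {\<tau> \<in> QV. qpi \<tau> \<in> ThompsonF}"

definition QF_group :: "(word \<Rightarrow> word) monoid" where
  "QF_group = \<lparr>carrier = QF, mult = (\<circ>), one = id\<rparr>"

definition F_group :: "(cantor \<Rightarrow> cantor) monoid" where
  "F_group = \<lparr>carrier = ThompsonF, mult = (\<circ>), one = id\<rparr>"

end

theory Submission
  imports Defs
begin

text \<open>Encode a vertex \<open>x\<close> of the tree as the dyadic point \<open>x10\<^sup>\<infinity>\<close> of Cantor space. An element
  of \<open>F\<close> acts by prefix replacement and is strictly order preserving, so it permutes the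
  finitely supported nonzero sequences, i.e. the dyadic points. Transporting \<open>f\<close> along the
  encoding gives a map \<open>s(f)\<close> of the tree, and \<open>s\<close> is multiplicative by construction. If
  \<open>\<tau> \<in> QV\<close> represents \<open>f\<close>, then \<open>s(f)\<close> agrees with \<open>\<tau>\<close> on every cone below a finite maximal
  antichain on which \<open>\<tau>\<close> acts by prefix replacement; off these cones there are only finitely
  many vertices, and injectivity of \<open>s(f)\<close> forces it to permute their \<open>\<tau>\<close>-images, so
  \<open>s(f) \<in> QF\<close> with \<open>\<pi>(s(f)) = f\<close>.\<close>

lemma cat_append: "cat (a @ b) \<omega> = cat a (cat b \<omega>)"
  unfolding cat_def by (auto simp: nth_append fun_eq_iff)

lemma cat_cancel_left:
  assumes "cat l \<omega> = cat l \<omega>'" shows "\<omega> = \<omega>'"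
proof
  fix k
  have "cat l \<omega> (k + length l) = cat l \<omega>' (k + length l)" using assms by simp
  then show "\<omega> k = \<omega>' k" by (simp add: cat_def)
qed

lemma cat_eq_imp_prefix:
  assumes "cat l \<omega> = cat l' \<omega>'" "length l \<le> length l'"
  shows "prefix l l'"
proof -
  have "take (length l) l' = l"
  proof (rule nth_equalityI)
    show "length (take (length l) l') = length l" using assms(2) by simp
    fix i assume "i < length (take (length l) l')"
    then have i: "i < length l" by simp
    have "cat l \<omega> i = cat l' \<omega>' i" using assms(1) by simp
    then show "take (length l) l' ! i = l ! i" using i assms(2) by (simp add: cat_def)
  qed
  then show ?thesis by (metis take_is_prefix)
qed

lemma finite_support_cat_iff: "finite {k. cat l \<omega> k} \<longleftrightarrow> finite {k. \<omega> k}"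
proof -
  have "{k. cat l \<omega> k} = {k. k < length l \<and> l ! k} \<union> (\<lambda>k. k + length l) ` {k. \<omega> k}"
  proof (intro equalityI subsetI)
    fix k assume "k \<in> {k. cat l \<omega> k}"
    then show "k \<in> {k. k < length l \<and> l ! k} \<union> (\<lambda>k. k + length l) ` {k. \<omega> k}"
      by (cases "k < length l") (auto simp: cat_def image_iff intro!: exI[of _ "k - length l"])
  qed (auto simp: cat_def)
  moreover have "inj (\<lambda>k::nat. k + length l)" by (simp add: inj_on_def)
  ultimately show ?thesis by (simp add: finite_image_iff inj_on_subset)
qed

lemma max_prefix_antichain_covers:
  assumes "max_prefix_antichain L"
  shows "\<exists>l\<in>L. \<exists>\<omega>'. \<omega> = cat l \<omega>'"
proof -
  define N where "N = Suc (Max (length ` L))"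
  define w where "w = map \<omega> [0..<N]"
  have "\<omega> = cat w (\<lambda>k. \<omega> (k + N))"
    by (auto simp: fun_eq_iff cat_def w_def)
  moreover obtain l where l: "l \<in> L" "prefix l w \<or> prefix w l"
    using assms unfolding max_prefix_antichain_def by blast
  moreover have "length l < length w"
    using assms l(1) unfolding max_prefix_antichain_def N_def w_def by (simp add: le_imp_less_Suc)
  ultimately show ?thesis
    by (metis cat_append prefixE prefix_length_le leD)
qed

definition adapted_antichain :: "(word \<Rightarrow> word) \<Rightarrow> word set \<Rightarrow> bool" where
  "adapted_antichain \<tau> L \<longleftrightarrow> max_prefix_antichain L \<and> (\<forall>l\<in>L. \<forall>s. \<tau> (l @ s) = \<tau> l @ s)"

text \<open>The choice in \<^const>\<open>qpi\<close> is harmless: two adapted antichains give the same value,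
  since the shorter of the two prefixes of \<open>\<omega>\<close> involved is a prefix of the longer.\<close>

lemma qpi_cat:
  assumes "adapted_antichain \<tau> L" "l \<in> L"
  shows "qpi \<tau> (cat l \<omega>) = cat (\<tau> l) \<omega>"
proof -
  let ?P = "\<lambda>y. \<exists>L. max_prefix_antichain L \<and> (\<forall>l\<in>L. \<forall>s. \<tau> (l @ s) = \<tau> l @ s) \<and>
       (\<exists>l'\<in>L. \<exists>\<omega>'. cat l \<omega> = cat l' \<omega>' \<and> y = cat (\<tau> l') \<omega>')"
  have "?P (cat (\<tau> l) \<omega>)"
    using assms unfolding adapted_antichain_def by blast
  then have "?P (qpi \<tau> (cat l \<omega>))" unfolding qpi_def by (rule someI[where P = ?P])
  then obtain L' l' \<omega>' where L': "\<forall>l\<in>L'. \<forall>s. \<tau> (l @ s) = \<tau> l @ s" "l' \<in> L'"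
    and eq: "cat l \<omega> = cat l' \<omega>'" and q: "qpi \<tau> (cat l \<omega>) = cat (\<tau> l') \<omega>'"
    by blast
  show ?thesis
  proof (cases "length l \<le> length l'")
    case True
    then obtain s where s: "l' = l @ s" using cat_eq_imp_prefix[OF eq] by (auto elim: prefixE)
    then have "\<omega> = cat s \<omega>'" using eq by (metis cat_append cat_cancel_left)
    moreover have "\<tau> l' = \<tau> l @ s" using assms unfolding adapted_antichain_def s by simp
    ultimately show ?thesis using q by (simp add: cat_append)
  next
    case False
    then obtain s where s: "l = l' @ s" using cat_eq_imp_prefix[OF eq[symmetric]] by (auto elim: prefixE)
    then have "\<omega>' = cat s \<omega>" using eq by (metis cat_append cat_cancel_left)
    moreover have "\<tau> l = \<tau> l' @ s" using L' unfolding s by simp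
    ultimately show ?thesis using q by (simp add: cat_append)
  qed
qed

lemma QV_has_adapted_antichain:
  assumes "\<tau> \<in> QV" shows "\<exists>L. adapted_antichain \<tau> L"
proof -
  define E where "E = {x. \<not> (\<tau> (x @ [False]) = \<tau> x @ [False] \<and> \<tau> (x @ [True]) = \<tau> x @ [True])}"
  have "finite E" using assms unfolding QV_def E_def by blast
  define N where "N = Suc (Max (insert 0 (length ` E)))"
  have not_E: "x \<notin> E" if "N \<le> length x" for x
  proof
    assume "x \<in> E"
    then have "length x \<le> Max (insert 0 (length ` E))" using \<open>finite E\<close> by simp
    then show False using that unfolding N_def by simp
  qed
  define L where "L = {w::word. length w = N}"
  have commutes: "\<tau> (l @ s) = \<tau> l @ s" if "length l = N" for l s
  proof (induction s rule: rev_induct)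
    case (snoc b s)
    have "l @ s \<notin> E" using that by (intro not_E) simp
    then have "\<tau> ((l @ s) @ [b]) = \<tau> (l @ s) @ [b]" unfolding E_def by (cases b) auto
    then show ?case using snoc by simp
  qed simp
  have "finite L"
    using finite_lists_length_eq[of "UNIV :: bool set" N] unfolding L_def by simp
  moreover have "\<exists>l\<in>L. prefix l w \<or> prefix w l" for w
  proof (cases "N \<le> length w")
    case True
    then show ?thesis by (intro bexI[of _ "take N w"]) (auto simp: L_def take_is_prefix)
  next
    case False
    then show ?thesis by (intro bexI[of _ "w @ replicate (N - length w) False"]) (auto simp: L_def)
  qed
  ultimately have "max_prefix_antichain L"
    unfolding max_prefix_antichain_def L_def by (auto elim: prefixE)
  then show ?thesis using commutes unfolding adapted_antichain_def L_def by blast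
qed

lemma ThompsonF_representative:
  assumes "f \<in> ThompsonF"
  obtains \<tau> L where "\<tau> \<in> QV" "f = qpi \<tau>" "adapted_antichain \<tau> L"
  using assms QV_has_adapted_antichain unfolding ThompsonF_def ThompsonV_def by blast

lemma bij_if_inj_and_agrees_off_finite:
  assumes "bij \<tau>" "inj g" "finite A" "\<And>x. x \<notin> A \<Longrightarrow> g x = \<tau> x"
  shows "bij g"
proof -
  have "g ` A \<subseteq> \<tau> ` A"
  proof
    fix y assume "y \<in> g ` A"
    then obtain a where a: "a \<in> A" "y = g a" by blast
    obtain z where z: "y = \<tau> z" using assms(1) by (metis bij_pointE)
    have "z \<in> A"
    proof (rule ccontr)
      assume "z \<notin> A"
      then have "g z = g a" using assms(4) a z by simp
      then show False using \<open>z \<notin> A\<close> a(1) assms(2) by (metis injD)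
    qed
    then show "y \<in> \<tau> ` A" using z by blast
  qed
  moreover have "card (g ` A) = card (\<tau> ` A)"
    using assms(1,2) by (metis bij_is_inj card_image inj_on_subset subset_UNIV)
  ultimately have "g ` A = \<tau> ` A" using assms(3) by (intro card_subset_eq) auto
  have "y \<in> range g" for y
  proof -
    obtain z where z: "y = \<tau> z" using assms(1) by (metis bij_pointE)
    show ?thesis
    proof (cases "z \<in> A")
      case True
      then show ?thesis using z \<open>g ` A = \<tau> ` A\<close> by blast
    next
      case False
      then show ?thesis using z assms(4) by (metis rangeI)
    qed
  qed
  then show ?thesis using assms(2) by (auto simp: bij_def)
qed

lemma finite_outside_cones:
  assumes "max_prefix_antichain L"
  shows "finite {x. \<not> (\<exists>l\<in>L. prefix l x)}"
proof (rule finite_subset)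
  show "{x. \<not> (\<exists>l\<in>L. prefix l x)} \<subseteq> (\<Union>l\<in>L. set (prefixes l))"
    using assms unfolding max_prefix_antichain_def by fastforce
  show "finite (\<Union>l\<in>L. set (prefixes l))"
    using assms unfolding max_prefix_antichain_def by blast
qed

lemma QV_if_agrees_on_cones:
  assumes "\<tau> \<in> QV" "adapted_antichain \<tau> L" "inj g" and agree: "\<And>l s. l \<in> L \<Longrightarrow> g (l @ s) = \<tau> (l @ s)"
  shows "g \<in> QV"
proof -
  define A where "A = {x. \<not> (\<exists>l\<in>L. prefix l x)}"
  have "finite A"
    using assms(2) finite_outside_cones unfolding adapted_antichain_def A_def by blast
  have "g x = \<tau> x" if "x \<notin> A" for x
    using that agree unfolding A_def by (auto elim: prefixE)
  then have "bij g"
    using assms(1,3) \<open>finite A\<close> unfolding QV_def by (blast intro: bij_if_inj_and_agrees_off_finite)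
  moreover have "g (x @ [b]) = g x @ [b]" if "x \<notin> A" for x b
  proof -
    obtain l s where "l \<in> L" "x = l @ s" using \<open>x \<notin> A\<close> unfolding A_def by (auto elim: prefixE)
    then show ?thesis
      using assms(2) agree[of l "s @ [b]"] agree[of l s] unfolding adapted_antichain_def by simp
  qed
  then have "{x. \<not> (g (x @ [False]) = g x @ [False] \<and> g (x @ [True]) = g x @ [True])} \<subseteq> A"
    by blast
  ultimately show ?thesis using \<open>finite A\<close> unfolding QV_def by (auto intro: finite_subset)
qed

lemma qpi_eq_if_agrees_on_cones:
  assumes "adapted_antichain \<tau> L" and agree: "\<And>l s. l \<in> L \<Longrightarrow> g (l @ s) = \<tau> (l @ s)"
  shows "qpi g = qpi \<tau>"
proof
  fix \<omega>
  have L: "max_prefix_antichain L" using assms(1) unfolding adapted_antichain_def by blast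
  have "adapted_antichain g L"
    using assms unfolding adapted_antichain_def by (metis append.right_neutral)
  moreover obtain l \<omega>' where "l \<in> L" "\<omega> = cat l \<omega>'"
    using max_prefix_antichain_covers[OF L] by blast
  ultimately show "qpi g \<omega> = qpi \<tau> \<omega>"
    using qpi_cat assms(1) agree[of l "[]"] by simp
qed

lemma lex_less_irrefl: "\<not> lex_less a a"
  unfolding lex_less_def by blast

lemma lex_less_linear:
  assumes "a \<noteq> b" shows "lex_less a b \<or> lex_less b a"
proof -
  obtain k where "a k \<noteq> b k" using assms by blast
  define n where "n = (LEAST k. a k \<noteq> b k)"
  have "a n \<noteq> b n" unfolding n_def by (rule LeastI) fact
  moreover have "\<forall>k<n. a k = b k" unfolding n_def using not_less_Least by blast
  ultimately show ?thesis unfolding lex_less_def by (cases "a n") auto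
qed

lemma not_lex_less_zero: "\<not> lex_less a (\<lambda>_. False)"
  unfolding lex_less_def by blast

lemma zero_lex_less: "\<omega> \<noteq> (\<lambda>_. False) \<Longrightarrow> lex_less (\<lambda>_. False) \<omega>"
  using lex_less_linear not_lex_less_zero by blast

lemma ThompsonF_strict_mono: "f \<in> ThompsonF \<Longrightarrow> lex_less a b \<Longrightarrow> lex_less (f a) (f b)"
  unfolding ThompsonF_def by blast

lemma ThompsonF_inj:
  assumes "f \<in> ThompsonF" shows "inj f"
proof (rule injI, rule ccontr)
  fix a b assume "f a = f b" "a \<noteq> b"
  then show False
    using lex_less_linear[of a b] lex_less_irrefl ThompsonF_strict_mono[OF assms] by metis
qed

definition dyadic :: "word \<Rightarrow> cantor" where
  "dyadic x = cat (x @ [True]) (\<lambda>_. False)"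

definition dyadic_points :: "cantor set" where
  "dyadic_points = {\<omega>. \<omega> \<noteq> (\<lambda>_. False) \<and> finite {k. \<omega> k}}"

text \<open>Inverse of \<^const>\<open>dyadic\<close> on \<^const>\<open>dyadic_points\<close>: cut before the last \<open>1\<close>.\<close>

definition dyadic_word :: "cantor \<Rightarrow> word" where
  "dyadic_word \<omega> = map \<omega> [0..<Max {k. \<omega> k}]"

lemma dyadic_apply: "dyadic x k = (if k < length x then x ! k else k = length x)"
  unfolding dyadic_def cat_def by (auto simp: nth_append)

lemma support_dyadic: "{k. dyadic x k} \<subseteq> {..length x}"
  by (auto simp: dyadic_apply split: if_splits)

lemma dyadic_in_dyadic_points: "dyadic x \<in> dyadic_points"
proof -
  have "dyadic x (length x)" by (simp add: dyadic_apply)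
  then have "dyadic x \<noteq> (\<lambda>_. False)" by auto
  then show ?thesis unfolding dyadic_points_def using support_dyadic finite_subset by blast
qed

lemma dyadic_word_dyadic [simp]: "dyadic_word (dyadic x) = x"
proof -
  have max: "Max {k. dyadic x k} = length x"
  proof (rule Max_eqI)
    show "finite {k. dyadic x k}" using support_dyadic finite_subset by blast
    show "length x \<in> {k. dyadic x k}" by (simp add: dyadic_apply)
  qed (use support_dyadic in auto)
  show ?thesis
    unfolding dyadic_word_def max by (intro nth_equalityI) (auto simp: dyadic_apply)
qed

lemma dyadic_dyadic_word:
  assumes "\<omega> \<in> dyadic_points" shows "dyadic (dyadic_word \<omega>) = \<omega>"
proof
  fix k
  define n where "n = Max {k. \<omega> k}"
  have fin: "finite {k. \<omega> k}" and ne: "{k. \<omega> k} \<noteq> {}"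
    using assms unfolding dyadic_points_def by auto
  have "\<omega> n" using Max_in[OF fin ne] unfolding n_def by simp
  moreover have "\<not> \<omega> k" if "n < k" for k using Max_ge[OF fin, of k] that unfolding n_def by auto
  ultimately show "dyadic (dyadic_word \<omega>) k = \<omega> k"
    unfolding dyadic_word_def n_def[symmetric] by (auto simp: dyadic_apply) (meson linorder_neqE_nat)
qed

text \<open>Finiteness of the support is preserved because \<open>f\<close> only replaces a prefix; nonzeroness
  because \<open>0\<^sup>\<infinity>\<close> is the lexicographic minimum.\<close>

lemma ThompsonF_preserves_dyadic_points:
  assumes f: "f \<in> ThompsonF" and \<omega>: "\<omega> \<in> dyadic_points" shows "f \<omega> \<in> dyadic_points"
proof -
  obtain \<tau> L where \<tau>: "f = qpi \<tau>" "adapted_antichain \<tau> L"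
    using ThompsonF_representative[OF f] by blast
  obtain l \<omega>' where l: "l \<in> L" "\<omega> = cat l \<omega>'"
    using \<tau>(2) max_prefix_antichain_covers unfolding adapted_antichain_def by blast
  have "f \<omega> = cat (\<tau> l) \<omega>'" using qpi_cat[OF \<tau>(2) l(1)] \<tau>(1) l(2) by simp
  then have "finite {k. f \<omega> k}"
    using \<omega> l(2) unfolding dyadic_points_def by (simp add: finite_support_cat_iff)
  moreover have "lex_less (\<lambda>_. False) \<omega>"
    using \<omega> zero_lex_less unfolding dyadic_points_def by blast
  then have "f \<omega> \<noteq> (\<lambda>_. False)"
    using ThompsonF_strict_mono[OF f] not_lex_less_zero by metis
  ultimately show ?thesis unfolding dyadic_points_def by blast
qed

definition splitting :: "(cantor \<Rightarrow> cantor) \<Rightarrow> word \<Rightarrow> word" where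
  "splitting f x = dyadic_word (f (dyadic x))"

lemma dyadic_splitting:
  "f \<in> ThompsonF \<Longrightarrow> dyadic (splitting f x) = f (dyadic x)"
  unfolding splitting_def
  by (simp add: dyadic_dyadic_word ThompsonF_preserves_dyadic_points dyadic_in_dyadic_points)

lemma splitting_comp:
  assumes "h \<in> ThompsonF" shows "splitting (f \<circ> h) = splitting f \<circ> splitting h"
proof
  fix x
  have "dyadic (splitting h x) = h (dyadic x)" by (rule dyadic_splitting[OF assms])
  then show "splitting (f \<circ> h) x = (splitting f \<circ> splitting h) x"
    by (simp add: splitting_def[of f] splitting_def[of "f \<circ> h"])
qed

lemma inj_splitting:
  assumes "f \<in> ThompsonF" shows "inj (splitting f)"
proof (rule injI)
  fix x y assume "splitting f x = splitting f y"
  then have "f (dyadic x) = f (dyadic y)" using dyadic_splitting[OF assms] by metis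
  then have "dyadic x = dyadic y" using ThompsonF_inj[OF assms] by (simp add: inj_eq)
  then show "x = y" by (metis dyadic_word_dyadic)
qed

lemma splitting_agrees_on_cones:
  assumes "f = qpi \<tau>" "adapted_antichain \<tau> L" "l \<in> L"
  shows "splitting f (l @ s) = \<tau> (l @ s)"
proof -
  have "f (dyadic (l @ s)) = f (cat l (cat (s @ [True]) (\<lambda>_. False)))"
    by (simp add: dyadic_def cat_append[symmetric])
  also have "\<dots> = cat (\<tau> l) (cat (s @ [True]) (\<lambda>_. False))"
    using qpi_cat[OF assms(2,3)] assms(1) by simp
  also have "\<dots> = dyadic (\<tau> (l @ s))"
    using assms(2,3) unfolding adapted_antichain_def by (simp add: dyadic_def cat_append[symmetric])
  finally show ?thesis unfolding splitting_def by simp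
qed

lemma splitting_section:
  assumes f: "f \<in> ThompsonF"
  shows "splitting f \<in> QF" "qpi (splitting f) = f"
proof -
  obtain \<tau> L where \<tau>: "\<tau> \<in> QV" "f = qpi \<tau>" "adapted_antichain \<tau> L"
    using ThompsonF_representative[OF f] by blast
  note agree = splitting_agrees_on_cones[OF \<tau>(2,3)]
  show "qpi (splitting f) = f"
    using qpi_eq_if_agrees_on_cones[OF \<tau>(3) agree] \<tau>(2) by simp
  moreover have "splitting f \<in> QV"
    using QV_if_agrees_on_cones[OF \<tau>(1,3) inj_splitting[OF f] agree] .
  ultimately show "splitting f \<in> QF" using f unfolding QF_def by simp
qed

theorem lemma2p5:
  shows "\<exists>s \<in> hom F_group QF_group. \<forall>f \<in> ThompsonF. qpi (s f) = f"
proof (rule bexI[of _ splitting])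
  show "\<forall>f \<in> ThompsonF. qpi (splitting f) = f" using splitting_section by blast
  show "splitting \<in> hom F_group QF_group"
    unfolding hom_def F_group_def QF_group_def using splitting_section splitting_comp by auto
qed

end
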